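(* Let $\mathbf{k}$ be a commutative unital ring, $R$ a $\mathbf{k}$-algebra, $\lambda\in\mathbf{k}$, and $P$ a Rota-Baxter operator of weight $\lambda$ on $R$. Let $\tilde P:=-\lambda\,\mathrm{id}_R-P$. (1) For all $a,b\in\mathbf{k}$, the operator $Q:=aP+b\tilde P$ is an extended Rota-Baxter operator of weight $(\lambda(a+b),ab\lambda^2)$. (2) Let $\mu,\kappa\in\mathbf{k}$ and let $a,b\in\mathbf{k}$ be the roots of $t^2-\mu t+\kappa$ (so $t^2-\mu t+\kappa=(t-a)(t-b)$). Then $Q:=aP+b\tilde P$ is an extended Rota-Baxter operator of weight $(\mu\lambda,\kappa\lambda^2)$. In particular, if $P$ is a Rota-Baxter operator of weight $1$, then $Q$ is an extended Rota-Baxter operator of weight $(\mu,\kappa)$.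
   Context: A Rota-Baxter operator of weight $\lambda$ on a $\mathbf{k}$-algebra $R$ is a $\mathbf{k}$-linear map $P:R\to R$ with $P(x)P(y)=P(xP(y))+P(P(x)y)+\lambda P(xy)$ for all $x,y\in R$. For $\lambda,\kappa\in\mathbf{k}$, an extended Rota-Baxter operator of weight $(\lambda,\kappa)$ on $R$ is a $\mathbf{k}$-linear map $P:R\to R$ such that $P(x)P(y)=P(xP(y))+P(P(x)y)+\lambda P(xy)+\kappa xy$ for all $x,y\in R$. *)

theory Defs
  imports Main "HOL-Computational_Algebra.Polynomial"
begin

definition k_algebra :: "('k::comm_ring_1 \<Rightarrow> 'r::ring \<Rightarrow> 'r) \<Rightarrow> bool" where
  "k_algebra smul \<longleftrightarrow> module smul \<and>
     (\<forall>c x y. smul c (x * y) = smul c x * y \<and> smul c (x * y) = x * smul c y)"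

definition rota_baxter :: "('k::comm_ring_1 \<Rightarrow> 'r::ring \<Rightarrow> 'r) \<Rightarrow> 'k \<Rightarrow> ('r \<Rightarrow> 'r) \<Rightarrow> bool" where
  "rota_baxter smul lam P \<longleftrightarrow> module_hom smul smul P \<and>
     (\<forall>x y. P x * P y = P (x * P y) + P (P x * y) + smul lam (P (x * y)))"

definition ext_rota_baxter :: "('k::comm_ring_1 \<Rightarrow> 'r::ring \<Rightarrow> 'r) \<Rightarrow> 'k \<Rightarrow> 'k \<Rightarrow> ('r \<Rightarrow> 'r) \<Rightarrow> bool" where
  "ext_rota_baxter smul lam kap P \<longleftrightarrow> module_hom smul smul P \<and>
     (\<forall>x y. P x * P y = P (x * P y) + P (P x * y) + smul lam (P (x * y)) + smul kap (x * y))"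

end

theory Submission
  imports Defs
begin

text \<open>Writing \<open>Q = a P + b Pt = (a - b) P - (b \<lambda>) id\<close>, the theorem follows from two
  closure properties of extended Rota-Baxter operators: rescaling \<open>Q \<mapsto> c Q\<close> turns the weight
  \<open>(\<lambda>, \<kappa>)\<close> into \<open>(c \<lambda>, c\<^sup>2 \<kappa>)\<close>, and shifting \<open>Q \<mapsto> Q - d id\<close> turns it into
  \<open>(\<lambda> + 2 d, \<kappa> + \<lambda> d + d\<^sup>2)\<close>. Starting from weight \<open>(\<lambda>, 0)\<close> this gives
  \<open>(\<lambda> (a + b), a b \<lambda>\<^sup>2)\<close>, and in part (2) Vieta's formulas give \<open>\<mu> = a + b\<close>, \<open>\<kappa> = a b\<close>.\<close>

lemma k_algebra_module: "k_algebra s \<Longrightarrow> module s"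
  by (simp add: k_algebra_def)

lemma k_algebra_scale_mult:
  assumes "k_algebra s"
  shows "s c x * y = s c (x * y)" and "x * s c y = s c (x * y)"
  using assms unfolding k_algebra_def by metis+

lemma ext_rota_baxter_if_rota_baxter:
  assumes "k_algebra s" and "rota_baxter s lam P"
  shows "ext_rota_baxter s lam 0 P"
proof -
  interpret module s using assms(1) by (rule k_algebra_module)
  show ?thesis
    using assms(2) by (simp add: rota_baxter_def ext_rota_baxter_def)
qed

lemma ext_rota_baxter_scale:
  assumes alg: "k_algebra s" and Q: "ext_rota_baxter s lam kap Q"
  shows "ext_rota_baxter s (c * lam) (c\<^sup>2 * kap) (\<lambda>x. s c (Q x))"
proof -
  interpret module s using alg by (rule k_algebra_module)
  interpret module_pair s s ..
  interpret Q: module_hom s s Q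
    using Q by (simp add: ext_rota_baxter_def)
  have "s c (Q x) * s c (Q y) =
          s c (Q (x * s c (Q y))) + s c (Q (s c (Q x) * y))
          + s (c * lam) (s c (Q (x * y))) + s (c\<^sup>2 * kap) (x * y)" for x y
  proof -
    have "s c (Q x) * s c (Q y) = s (c * c) (Q x * Q y)"
      by (simp add: k_algebra_scale_mult[OF alg])
    also have "\<dots> = s (c * c) (Q (x * Q y) + Q (Q x * y) + s lam (Q (x * y)) + s kap (x * y))"
      using Q by (simp add: ext_rota_baxter_def)
    finally show ?thesis
      by (simp add: k_algebra_scale_mult[OF alg] Q.scale scale_right_distrib
          power2_eq_square ac_simps)
  qed
  then show ?thesis
    using Q by (simp add: ext_rota_baxter_def module_hom_scale)
qed

lemma ext_rota_baxter_shift: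
  assumes alg: "k_algebra s" and Q: "ext_rota_baxter s lam kap Q"
  shows "ext_rota_baxter s (lam + 2 * d) (kap + lam * d + d\<^sup>2) (\<lambda>x. Q x - s d x)"
proof -
  interpret module s using alg by (rule k_algebra_module)
  interpret module_pair s s ..
  interpret Q: module_hom s s Q
    using Q by (simp add: ext_rota_baxter_def)
  \<comment> \<open>needed because the simplifier collects \<open>d + d\<close> into \<open>d * 2\<close> inside scalars\<close>
  have scale_double: "s (u * 2) z = s u z + s u z" "s (u * (v * 2)) z = s (u * v) z + s (u * v) z"
    for u v z
    by (metis mult_2_right distrib_left scale_left_distrib)+
  have "(Q x - s d x) * (Q y - s d y) =
          (Q (x * (Q y - s d y)) - s d (x * (Q y - s d y)))
          + (Q ((Q x - s d x) * y) - s d ((Q x - s d x) * y))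
          + s (lam + 2 * d) (Q (x * y) - s d (x * y))
          + s (kap + lam * d + d\<^sup>2) (x * y)" for x y
  proof -
    have "(Q x - s d x) * (Q y - s d y) =
            Q x * Q y - s d (x * Q y) - s d (Q x * y) + s (d * d) (x * y)"
      by (simp add: algebra_simps k_algebra_scale_mult[OF alg])
    also have "\<dots> = Q (x * Q y) + Q (Q x * y) + s lam (Q (x * y)) + s kap (x * y)
                    - s d (x * Q y) - s d (Q x * y) + s (d * d) (x * y)"
      using Q by (simp add: ext_rota_baxter_def)
    also have "\<dots> = (Q (x * (Q y - s d y)) - s d (x * (Q y - s d y)))
          + (Q ((Q x - s d x) * y) - s d ((Q x - s d x) * y))
          + s (lam + 2 * d) (Q (x * y) - s d (x * y))
          + s (kap + lam * d + d\<^sup>2) (x * y)"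
      using scale_double
      by (simp add: algebra_simps k_algebra_scale_mult[OF alg] Q.diff Q.scale power2_eq_square)
    finally show ?thesis .
  qed
  then show ?thesis
    using Q by (simp add: ext_rota_baxter_def module_hom_sub)
qed

lemma monic_quadratic_eq_linear_product_iff:
  fixes a b mu kap :: "'a::comm_ring_1"
  shows "[:kap, - mu, 1:] = [:- a, 1:] * [:- b, 1:] \<longleftrightarrow> mu = a + b \<and> kap = a * b"
  by (auto simp: algebra_simps)

theorem corollary2p6:
  fixes smul :: "'k::comm_ring_1 \<Rightarrow> 'r::ring \<Rightarrow> 'r"
    and lam :: 'k and P :: "'r \<Rightarrow> 'r"
  assumes alg: "k_algebra smul"
    and rb: "rota_baxter smul lam P"
  defines "Pt \<equiv> (\<lambda>x. - smul lam x - P x)"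
  shows "(\<forall>a b. ext_rota_baxter smul (lam * (a + b)) (a * b * lam ^ 2)
                 (\<lambda>x. smul a (P x) + smul b (Pt x)))
       \<and> (\<forall>mu kap a b. [:kap, - mu, 1:] = [:- a, 1:] * [:- b, 1:] \<longrightarrow>
           ext_rota_baxter smul (mu * lam) (kap * lam ^ 2) (\<lambda>x. smul a (P x) + smul b (Pt x))
           \<and> (lam = 1 \<longrightarrow> ext_rota_baxter smul mu kap (\<lambda>x. smul a (P x) + smul b (Pt x))))"
proof -
  interpret module smul using alg by (rule k_algebra_module)
  have Q: "ext_rota_baxter smul (lam * (a + b)) (a * b * lam ^ 2)
            (\<lambda>x. smul a (P x) + smul b (Pt x))" for a b
  proof -
    have "ext_rota_baxter smul ((a - b) * lam + 2 * (b * lam))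
            ((a - b)\<^sup>2 * 0 + (a - b) * lam * (b * lam) + (b * lam)\<^sup>2)
            (\<lambda>x. smul (a - b) (P x) - smul (b * lam) x)"
      using alg ext_rota_baxter_if_rota_baxter[OF alg rb]
      by (intro ext_rota_baxter_shift ext_rota_baxter_scale)
    moreover have "(\<lambda>x. smul (a - b) (P x) - smul (b * lam) x)
                 = (\<lambda>x. smul a (P x) + smul b (Pt x))"
      by (auto simp: Pt_def algebra_simps)
    moreover have "(a - b) * lam + 2 * (b * lam) = lam * (a + b)"
      and "(a - b)\<^sup>2 * 0 + (a - b) * lam * (b * lam) + (b * lam)\<^sup>2 = a * b * lam ^ 2"
      by (simp_all add: algebra_simps power2_eq_square)
    ultimately show ?thesis
      by simp
  qed
  show ?thesis
  proof (intro conjI allI impI Q)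
    fix mu kap a b :: 'k
    assume "[:kap, - mu, 1:] = [:- a, 1:] * [:- b, 1:]"
    then have vieta: "mu = a + b" "kap = a * b"
      unfolding monic_quadratic_eq_linear_product_iff by simp_all
    then show "ext_rota_baxter smul (mu * lam) (kap * lam ^ 2) (\<lambda>x. smul a (P x) + smul b (Pt x))"
      using Q[of a b] by (simp add: mult.commute)
    show "ext_rota_baxter smul mu kap (\<lambda>x. smul a (P x) + smul b (Pt x))" if "lam = 1"
      using Q[of a b] vieta that by simp
  qed
qed

end
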